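(* Let $\mathcal{A}$ be a central arrangement of rank $r$ and let $\pi=(\pi_1,\ldots,\pi_r)$ be a factorization of $\mathcal{A}$. Suppose $Z\in L(\mathcal{A})$ is modular of rank $r-1$ with $\pi_1=\mathcal{A}\setminus\mathcal{A}_Z$. Then every $H\in\pi_1$ is distinguished with respect to $\pi$. In particular, for $H_0\in\pi_1$ with triple $(\mathcal{A},\mathcal{A}',\mathcal{A}'')$, the restriction map $\mathrm{R}:\mathcal{A}_Z\to\mathcal{A}''$, $H\mapsto H\cap H_0$, is bijective.
   Context: A central arrangement is a finite set of linear hyperplanes in $V=\mathbb{K}^\ell$ ($\mathbb{K}$ a field); its rank is the codimension of the intersection of all its members. $L(\mathcal{A})$ is the set of intersections of subsets of $\mathcal{A}$ ($V$ included), with rank $r(X)=\operatorname{codim}X$; $\mathcal{A}_X=\{H\in\mathcal{A}\mid X\subseteq H\}$. $X\in L(\mathcal{A})$ is modular if $X+Y\in L(\mathcal{A})$ for all $Y\in L(\mathcal{A})$. A partition $\pi=(\pi_1,\ldots,\pi_s)$ is a factorization (nice) if it is independent (for every choice $H_i\in\pi_i$, $\operatorname{codim}(H_1\cap\cdots\cap H_s)=s$) and for every $X\in L(\mathcal{A})\setminus\{V\}$ some non-empty set $\pi_i\cap\mathcal{A}_X$ is a singleton. For $H_0\in\pi_1$ the triple is $\mathcal{A}'=\mathcal{A}\setminus\{H_0\}$, $\mathcal{A}''=\{H_0\cap H\mid H\in\mathcal{A}'\}$; $H_0$ is distinguished with respect to $\pi$ if the non-empty sets $\pi_i\cap\mathcal{A}'$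 form a factorization of $\mathcal{A}'$. *)

theory Defs
  imports Complex_Main "HOL-Library.Function_Algebras"
begin

text \<open>The ambient space V = K^l is modelled as functions 'n \<Rightarrow> 'a with 'n finite
 (l = CARD('n)) and 'a a field, with pointwise scalar multiplication.\<close>

definition vscale :: "'a::field \<Rightarrow> ('n \<Rightarrow> 'a) \<Rightarrow> ('n \<Rightarrow> 'a)" where
  "vscale c x = (\<lambda>i. c * x i)"

lemma vscale_vector_space: "vector_space (vscale :: 'a::field \<Rightarrow> ('n \<Rightarrow> 'a) \<Rightarrow> _)"
  by unfold_locales (auto simp: vscale_def algebra_simps fun_eq_iff)

definition codim :: "('n::finite \<Rightarrow> 'a::field) set \<Rightarrow> nat" where
  "codim X = card (UNIV :: 'n set) - vector_space.dim (vscale :: 'a \<Rightarrow> ('n \<Rightarrow> 'a) \<Rightarrow> _) X"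

definition lin_hyperplane :: "('n::finite \<Rightarrow> 'a::field) set \<Rightarrow> bool" where
  "lin_hyperplane H \<longleftrightarrow> (\<exists>c. c \<noteq> 0 \<and> H = {x. (\<Sum>i\<in>UNIV. c i * x i) = 0})"

definition central_arrangement :: "('n::finite \<Rightarrow> 'a::field) set set \<Rightarrow> bool" where
  "central_arrangement A \<longleftrightarrow> finite A \<and> (\<forall>H\<in>A. lin_hyperplane H)"

text \<open>Intersection lattice; the empty intersection is V.\<close>
definition lattice_L :: "('n::finite \<Rightarrow> 'a::field) set set \<Rightarrow> ('n \<Rightarrow> 'a) set set" where
  "lattice_L A = {\<Inter>B | B. B \<subseteq> A}"

definition arr_rank :: "('n::finite \<Rightarrow> 'a::field) set set \<Rightarrow> nat" where
  "arr_rank A = codim (\<Inter>A)"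

definition loc :: "('n::finite \<Rightarrow> 'a::field) set set \<Rightarrow> ('n \<Rightarrow> 'a) set \<Rightarrow> ('n \<Rightarrow> 'a) set set" where
  "loc A X = {H \<in> A. X \<subseteq> H}"

definition subspace_sum :: "('n \<Rightarrow> 'a::field) set \<Rightarrow> ('n \<Rightarrow> 'a) set \<Rightarrow> ('n \<Rightarrow> 'a) set" where
  "subspace_sum X Y = {x + y | x y. x \<in> X \<and> y \<in> Y}"

definition modular :: "('n::finite \<Rightarrow> 'a::field) set set \<Rightarrow> ('n \<Rightarrow> 'a) set \<Rightarrow> bool" where
  "modular A X \<longleftrightarrow> X \<in> lattice_L A \<and> (\<forall>Y\<in>lattice_L A. subspace_sum X Y \<in> lattice_L A)"

definition is_partition :: "'b set \<Rightarrow> 'b set list \<Rightarrow> bool" where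
  "is_partition A ps \<longleftrightarrow> (\<forall>i<length ps. ps ! i \<noteq> {}) \<and>
     (\<forall>i<length ps. \<forall>j<length ps. i \<noteq> j \<longrightarrow> ps ! i \<inter> ps ! j = {}) \<and> \<Union>(set ps) = A"

definition independent_part :: "('n::finite \<Rightarrow> 'a::field) set set list \<Rightarrow> bool" where
  "independent_part ps \<longleftrightarrow>
     (\<forall>Hs. (\<forall>i<length ps. Hs i \<in> ps ! i) \<longrightarrow> codim (\<Inter>i\<in>{..<length ps}. Hs i) = length ps)"

definition factorization :: "('n::finite \<Rightarrow> 'a::field) set set \<Rightarrow> ('n \<Rightarrow> 'a) set set list \<Rightarrow> bool" where
  "factorization A ps \<longleftrightarrow> is_partition A ps \<and> independent_part ps \<and>
     (\<forall>X\<in>lattice_L A - {UNIV}. \<exists>i<length ps. card (ps ! i \<inter> loc A X) = 1)"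

definition distinguished :: "('n::finite \<Rightarrow> 'a::field) set set \<Rightarrow> ('n \<Rightarrow> 'a) set set list \<Rightarrow> ('n \<Rightarrow> 'a) set \<Rightarrow> bool" where
  "distinguished A ps H0 \<longleftrightarrow>
     factorization (A - {H0}) (filter (\<lambda>b. b \<noteq> {}) (map (\<lambda>b. b - {H0}) ps))"

definition restr_arr :: "('n::finite \<Rightarrow> 'a::field) set set \<Rightarrow> ('n \<Rightarrow> 'a) set \<Rightarrow> ('n \<Rightarrow> 'a) set set" where
  "restr_arr A H0 = {H0 \<inter> H | H. H \<in> A - {H0}}"

end

theory Submission
  imports Defs "HOL-Library.Cardinality"
begin

text \<open>
  Let \<open>P = A - A\<^sub>Z\<close> be the first block and \<open>H\<^sub>0 \<in> P\<close>. Deleting \<open>H\<^sub>0\<close> can only spoil the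
  singleton condition at a flat \<open>X\<close> with \<open>P \<inter> A\<^sub>X = {H\<^sub>0}\<close>; but such an \<open>X\<close> is cut out by
  hyperplanes through \<open>Z\<close>, whence \<open>Z \<subseteq> X \<subseteq> H\<^sub>0\<close>, which is absurd. Independence is inherited,
  except when \<open>P = {H\<^sub>0}\<close>: then the remaining blocks lie in \<open>A\<^sub>Z\<close>, and \<open>codim Z = r - 1\<close>
  squeezes the codimension of their intersections to \<open>r - 1\<close>.

  Two hyperplanes through \<open>Z\<close> with the same trace on \<open>H\<^sub>0\<close> would meet exactly in that trace,
  which would then contain \<open>Z\<close>; so restriction is injective. For surjectivity, given
  \<open>H \<in> A - {H\<^sub>0}\<close>, modularity makes \<open>Z + (H \<inter> H\<^sub>0)\<close> a flat, and since \<open>Z \<inter> H\<^sub>0\<close> already has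
  the dimension of the centre \<open>\<Inter>A\<close>, a dimension count shows that this flat is a hyperplane
  through \<open>Z\<close> whose trace on \<open>H\<^sub>0\<close> is \<open>H \<inter> H\<^sub>0\<close>.
\<close>

lemma sum_apply: "(\<Sum>i\<in>S. f i) x = (\<Sum>i\<in>S. f i x)"
  by (induction S rule: infinite_finite_induct) auto

definition std_basis :: "('n::finite \<Rightarrow> 'a::field) set" where
  "std_basis = range (\<lambda>i j. if j = i then 1 else 0)"

lemma independent_std_basis: "\<not> module.dependent vscale (std_basis :: ('n::finite \<Rightarrow> 'a::field) set)"
proof -
  interpret V: vector_space "vscale :: 'a \<Rightarrow> ('n \<Rightarrow> 'a) \<Rightarrow> _" by (rule vscale_vector_space)
  show ?thesis
    unfolding V.dependent_def
  proof
    assume "\<exists>e\<in>std_basis. e \<in> V.span (std_basis - {e})"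
    then obtain i where i: "(\<lambda>j. if j = i then 1 else 0) \<in> V.span (std_basis - {\<lambda>j. if j = i then (1::'a) else 0})"
      unfolding std_basis_def by auto
    have "V.subspace {x::'n\<Rightarrow>'a. x i = 0}"
      by (auto simp: V.subspace_def vscale_def)
    moreover have "std_basis - {\<lambda>j. if j = i then (1::'a) else 0} \<subseteq> {x. x i = 0}"
      by (auto simp: std_basis_def fun_eq_iff)
    ultimately have "V.span (std_basis - {\<lambda>j. if j = i then (1::'a) else 0}) \<subseteq> {x. x i = 0}"
      using V.span_minimal by blast
    with i show False by auto
  qed
qed

lemma span_std_basis: "module.span vscale (std_basis :: ('n::finite \<Rightarrow> 'a::field) set) = UNIV"
proof -
  interpret V: vector_space "vscale :: 'a \<Rightarrow> ('n \<Rightarrow> 'a) \<Rightarrow> _" by (rule vscale_vector_space)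
  have "x \<in> V.span std_basis" for x :: "'n \<Rightarrow> 'a"
  proof -
    have "x = (\<Sum>i\<in>UNIV. vscale (x i) (\<lambda>j. if j = i then 1 else 0))"
      by (auto simp: fun_eq_iff vscale_def sum_apply if_distrib cong: if_cong)
    also have "\<dots> \<in> V.span std_basis"
      by (intro V.span_sum V.span_scale V.span_base) (auto simp: std_basis_def)
    finally show ?thesis .
  qed
  then show ?thesis by auto
qed

interpretation V: finite_dimensional_vector_space "vscale :: 'a::field \<Rightarrow> ('n::finite \<Rightarrow> 'a) \<Rightarrow> _" std_basis
  by (rule finite_dimensional_vector_space.intro[OF vscale_vector_space])
    (unfold_locales, simp add: std_basis_def, use independent_std_basis in blast, use span_std_basis in blast)

lemma card_std_basis [simp]: "card (std_basis :: ('n::finite \<Rightarrow> 'a::field) set) = CARD('n)"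
  unfolding std_basis_def by (rule card_image) (auto simp: inj_on_def fun_eq_iff split: if_splits)

lemma dim_UNIV_fun: "V.dim (UNIV :: ('n::finite \<Rightarrow> 'a::field) set) = CARD('n)"
  by simp

lemma dim_le_card: "V.dim (X :: ('n::finite \<Rightarrow> 'a::field) set) \<le> CARD('n)"
  using V.dim_subset[of X UNIV] by simp

lemma subspace_eq_UNIV_if_dim:
  assumes "V.subspace (W :: ('n::finite \<Rightarrow> 'a::field) set)" "CARD('n) \<le> V.dim W"
  shows "W = UNIV"
  using V.subspace_dim_equal[OF assms(1) V.subspace_UNIV subset_UNIV] assms(2) by simp

lemma subspace_hyperplane:
  assumes "lin_hyperplane (H :: ('n::finite \<Rightarrow> 'a::field) set)"
  shows "V.subspace H"
proof -
  obtain c where H: "H = {x. (\<Sum>i\<in>UNIV. c i * x i) = 0}" using assms lin_hyperplane_def by blast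
  show ?thesis unfolding H V.subspace_def
    by (auto simp: vscale_def distrib_left sum.distrib mult.left_commute[of "c _"] sum_distrib_left[symmetric])
qed

lemma dim_hyperplane:
  assumes "lin_hyperplane (H :: ('n::finite \<Rightarrow> 'a::field) set)"
  shows "V.dim H + 1 = CARD('n)"
proof -
  obtain c where "c \<noteq> 0" and H: "H = {x. (\<Sum>i\<in>UNIV. c i * x i) = 0}"
    using assms lin_hyperplane_def by blast
  then obtain i where ci: "c i \<noteq> 0" by (auto simp: fun_eq_iff)
  define v :: "'n \<Rightarrow> 'a" where "v = (\<lambda>j. if j = i then 1 else 0)"
  define f where "f = (\<lambda>x::'n\<Rightarrow>'a. \<Sum>j\<in>UNIV. c j * x j)"
  have "f v = c i" by (simp add: f_def v_def if_distrib cong: if_cong)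
  then have f_shift: "f (x - vscale t v) = f x - t * c i" for x t
    by (simp add: f_def vscale_def algebra_simps sum_subtractf sum_distrib_left[symmetric])
  have "v \<noteq> 0" by (auto simp: v_def fun_eq_iff)
  \<comment> \<open>\<open>v\<close> spans a complement of \<open>H\<close>, since \<open>f\<close> does not vanish on it\<close>
  have sum_UNIV: "{x + y |x y. x \<in> H \<and> y \<in> V.span {v}} = UNIV"
  proof (intro antisym subset_UNIV subsetI CollectI)
    fix x :: "'n \<Rightarrow> 'a"
    define t where "t = f x / c i"
    have "x - vscale t v \<in> H" using f_shift[of x t] ci unfolding H t_def by (simp add: f_def)
    moreover have "vscale t v \<in> V.span {v}" by (intro V.span_scale V.span_base) simp
    ultimately show "\<exists>a b. x = a + b \<and> a \<in> H \<and> b \<in> V.span {v}"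
      by (intro exI[of _ "x - vscale t v"] exI[of _ "vscale t v"]) simp
  qed
  have "H \<inter> V.span {v} \<subseteq> {0}"
  proof
    fix y assume y: "y \<in> H \<inter> V.span {v}"
    then obtain t where t: "y = vscale t v" by (auto simp: V.span_singleton)
    have "f y = t * c i" using f_shift[of 0 t] by (simp add: t f_def sum_negf)
    moreover have "f y = 0" using y by (simp add: H f_def)
    ultimately show "y \<in> {0}" using ci by (simp add: t vscale_def fun_eq_iff)
  qed
  then have "V.dim (H \<inter> V.span {v}) = 0" using V.dim_eq_0 by blast
  moreover have "V.dim (V.span {v}) = 1" using \<open>v \<noteq> 0\<close> by simp
  moreover have "V.dim (UNIV :: ('n \<Rightarrow> 'a) set) = CARD('n)" by simp
  ultimately show ?thesis
    using V.dim_sums_Int[OF subspace_hyperplane[OF assms] V.subspace_span[of "{v}"]]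
    unfolding sum_UNIV by linarith
qed

lemma subspace_sum_eq_span:
  assumes "V.subspace (S :: ('n::finite \<Rightarrow> 'a::field) set)" "V.subspace T"
  shows "subspace_sum S T = V.span (S \<union> T)"
proof -
  have "V.span S = S" "V.span T = T" using assms V.span_eq_iff by blast+
  then show ?thesis using V.span_Un[of S T] unfolding subspace_sum_def by (simp only:)
qed

lemma subspace_subspace_sum:
  assumes "V.subspace (S :: ('n::finite \<Rightarrow> 'a::field) set)" "V.subspace T"
  shows "V.subspace (subspace_sum S T)"
  unfolding subspace_sum_eq_span[OF assms] by (rule V.subspace_span)

lemma subset_subspace_sum:
  assumes "V.subspace (S :: ('n::finite \<Rightarrow> 'a::field) set)" "V.subspace T"
  shows "S \<subseteq> subspace_sum S T" "T \<subseteq> subspace_sum S T"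
  unfolding subspace_sum_eq_span[OF assms] by (auto intro: V.span_base)

lemma dim_subspace_sum_Int:
  assumes "V.subspace (S :: ('n::finite \<Rightarrow> 'a::field) set)" "V.subspace T"
  shows "V.dim (subspace_sum S T) + V.dim (S \<inter> T) = V.dim S + V.dim T"
  unfolding subspace_sum_def by (rule V.dim_sums_Int[OF assms])

lemma subspace_eq_UNIV_if_hyperplane_psubset:
  assumes "lin_hyperplane (H :: ('n::finite \<Rightarrow> 'a::field) set)" "V.subspace W" "H \<subset> W"
  shows "W = UNIV"
proof -
  have "V.span H = H" "V.span W = W"
    using assms(2) subspace_hyperplane[OF assms(1)] V.span_eq_iff by blast+
  with assms(3) have "V.span H \<subset> V.span W" by (simp only:)
  then have "V.dim H < V.dim W" by (rule V.dim_psubset)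
  then show ?thesis using dim_hyperplane[OF assms(1)] subspace_eq_UNIV_if_dim[OF assms(2)] by simp
qed

lemma dim_Int_hyperplane:
  assumes "V.subspace (Y :: ('n::finite \<Rightarrow> 'a::field) set)" "lin_hyperplane H"
  shows "V.dim Y \<le> V.dim (Y \<inter> H) + 1"
    and "\<not> Y \<subseteq> H \<Longrightarrow> V.dim (Y \<inter> H) + 1 = V.dim Y"
proof -
  have H: "V.subspace H" by (rule subspace_hyperplane[OF assms(2)])
  note dims = dim_subspace_sum_Int[OF assms(1) H] dim_hyperplane[OF assms(2)]
  show "V.dim Y \<le> V.dim (Y \<inter> H) + 1"
    using dims dim_le_card[of "subspace_sum Y H"] by linarith
  assume "\<not> Y \<subseteq> H"
  then have "H \<subset> subspace_sum Y H"
    using subset_subspace_sum[OF assms(1) H] by blast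
  then have "subspace_sum Y H = UNIV"
    by (rule subspace_eq_UNIV_if_hyperplane_psubset[OF assms(2) subspace_subspace_sum[OF assms(1) H]])
  then show "V.dim (Y \<inter> H) + 1 = V.dim Y"
    using dims dim_UNIV_fun[where 'a='a and 'n='n] by simp
qed

lemma dim_Int_hyperplanes:
  assumes "lin_hyperplane (H :: ('n::finite \<Rightarrow> 'a::field) set)" "lin_hyperplane H'" "H \<noteq> H'"
  shows "V.dim (H \<inter> H') + 2 = CARD('n)"
proof -
  have "\<not> H \<subseteq> H'"
  proof
    assume "H \<subseteq> H'"
    with assms(3) have "H' = UNIV"
      using subspace_eq_UNIV_if_hyperplane_psubset[OF assms(1) subspace_hyperplane[OF assms(2)]] by blast
    then show False
      using dim_hyperplane[OF assms(2)] dim_UNIV_fun[where 'a='a and 'n='n] by simp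
  qed
  then show ?thesis
    using dim_Int_hyperplane(2)[OF subspace_hyperplane[OF assms(1)] assms(2)] dim_hyperplane[OF assms(1)]
    by linarith
qed

lemma hyperplane_Int_eq:
  assumes "lin_hyperplane (H :: ('n::finite \<Rightarrow> 'a::field) set)" "lin_hyperplane H'" "lin_hyperplane H''"
    and "H \<noteq> H'" "H \<noteq> H''" "H \<inter> H' \<subseteq> H''"
  shows "H \<inter> H' = H \<inter> H''"
  using assms(6) dim_Int_hyperplanes[OF assms(1,2,4)] dim_Int_hyperplanes[OF assms(1,3,5)]
  by (intro V.subspace_dim_equal) (auto intro: V.subspace_inter subspace_hyperplane assms(1-3))

lemma lattice_L_iff: "X \<in> lattice_L A \<longleftrightarrow> (\<exists>B\<subseteq>A. X = \<Inter>B)"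
  unfolding lattice_L_def by blast

lemma loc_Diff: "loc (A - {H0}) X = loc A X - {H0}"
  unfolding loc_def by blast

lemma lattice_L_mono: "B \<subseteq> A \<Longrightarrow> lattice_L B \<subseteq> lattice_L A"
  unfolding lattice_L_def by blast

lemma Inter_subset_lattice_L: "X \<in> lattice_L A \<Longrightarrow> \<Inter>A \<subseteq> X"
  unfolding lattice_L_def by blast

lemma subspace_lattice_L:
  assumes "central_arrangement (A :: ('n::finite \<Rightarrow> 'a::field) set set)" "X \<in> lattice_L A"
  shows "V.subspace X"
proof -
  obtain B where "B \<subseteq> A" "X = \<Inter>B" using assms(2) unfolding lattice_L_iff by blast
  then show ?thesis
    using assms(1) subspace_hyperplane V.subspace_Inter unfolding central_arrangement_def by blast
qed

lemma lattice_L_mem_if_dim: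
  assumes "central_arrangement (A :: ('n::finite \<Rightarrow> 'a::field) set set)" "X \<in> lattice_L A"
    and "V.dim X + 1 = CARD('n)"
  shows "X \<in> A"
proof -
  obtain B where B: "B \<subseteq> A" "X = \<Inter>B" using assms(2) unfolding lattice_L_iff by blast
  moreover have "B \<noteq> {}"
    using assms(3) B dim_UNIV_fun[where 'a='a and 'n='n] by auto
  ultimately obtain H where H: "H \<in> A" "X \<subseteq> H" by blast
  then have "lin_hyperplane H" using assms(1) central_arrangement_def by blast
  then have "X = H"
    using V.subspace_dim_equal[OF subspace_lattice_L[OF assms(1,2)] subspace_hyperplane H(2)]
      dim_hyperplane[OF \<open>lin_hyperplane H\<close>] assms(3) by simp
  with H show ?thesis by simp
qed

lemma is_partition_Cons:
  "is_partition A (P # R) \<longleftrightarrow> P \<noteq> {} \<and> (\<forall>k<length R. R!k \<noteq> {}) \<and> (\<forall>k<length R. P \<inter> R!k = {}) \<and>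
     (\<forall>i<length R. \<forall>j<length R. i \<noteq> j \<longrightarrow> R!i \<inter> R!j = {}) \<and> P \<union> \<Union>(set R) = A"
  unfolding is_partition_def length_Cons All_less_Suc2 nth_Cons_0 nth_Cons_Suc
  by (auto simp: Int_commute) (metis disjoint_iff)+

lemma independent_part_Cons_subset:
  assumes "independent_part (P # R)" "P' \<subseteq> P"
  shows "independent_part (P' # R)"
  unfolding independent_part_def
proof (intro allI impI)
  fix Hs assume "\<forall>i<length (P' # R). Hs i \<in> (P' # R) ! i"
  then have "\<forall>i<length (P # R). Hs i \<in> (P # R) ! i"
    using assms(2) by (auto simp: nth_Cons split: nat.splits)
  then show "codim (\<Inter>i\<in>{..<length (P' # R)}. Hs i) = length (P' # R)"
    using assms(1) unfolding independent_part_def by simp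
qed

lemma independent_part_tail:
  fixes A :: "('n::finite \<Rightarrow> 'a::field) set set"
  assumes "central_arrangement A" "independent_part (P # R)" "H0 \<in> P" "lin_hyperplane H0"
    and "\<forall>B\<in>set R. B \<subseteq> loc A Z" "codim Z = length R"
  shows "independent_part R"
  unfolding independent_part_def
proof (intro allI impI)
  fix Hs assume Hs: "\<forall>i<length R. Hs i \<in> R ! i"
  define m where "m = length R"
  define Y where "Y = (\<Inter>i\<in>{..<m}. Hs i)"
  have "\<forall>i<length (P # R). (case i of 0 \<Rightarrow> H0 | Suc k \<Rightarrow> Hs k) \<in> (P # R) ! i"
    using Hs assms(3) by (auto split: nat.split)
  then have "codim (\<Inter>i\<in>{..<Suc m}. case i of 0 \<Rightarrow> H0 | Suc k \<Rightarrow> Hs k) = Suc m"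
    using assms(2) unfolding independent_part_def m_def by fastforce
  then have codim_Y_H0: "CARD('n) - V.dim (Y \<inter> H0) = Suc m"
    unfolding lessThan_Suc_eq_insert_0 codim_def Y_def by (simp add: Int_commute)
  have loc: "Hs i \<in> loc A Z" if "i < m" for i
    using Hs assms(5) that unfolding m_def by (meson nth_mem subsetD)
  then have "Z \<subseteq> Y" unfolding Y_def loc_def by blast
  then have "V.dim Z \<le> V.dim Y" by (rule V.dim_subset)
  have "V.subspace Y"
    unfolding Y_def using loc assms(1) subspace_hyperplane
    by (intro V.subspace_Inter) (auto simp: loc_def central_arrangement_def)
  then have "V.dim Y \<le> V.dim (Y \<inter> H0) + 1" by (rule dim_Int_hyperplane(1)[OF _ assms(4)])
  then show "codim (\<Inter>i\<in>{..<length R}. Hs i) = length R"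
    using \<open>V.dim Z \<le> V.dim Y\<close> codim_Y_H0 assms(6) dim_le_card[of Z] dim_le_card[of "Y \<inter> H0"]
    unfolding codim_def Y_def m_def by linarith
qed

lemma complement_loc_Int_loc_ne_singleton:
  assumes "X \<in> lattice_L (A - {H0})" "\<not> Z \<subseteq> H0"
  shows "(A - loc A Z) \<inter> loc A X \<noteq> {H0}"
proof
  assume H0: "(A - loc A Z) \<inter> loc A X = {H0}"
  obtain B where B: "B \<subseteq> A - {H0}" "X = \<Inter>B" using assms(1) unfolding lattice_L_iff by blast
  have "Z \<subseteq> b" if "b \<in> B" for b
  proof -
    have "b \<in> loc A X" "b \<noteq> H0" using B that unfolding loc_def by auto
    then have "b \<notin> A - loc A Z" using H0 by (metis IntI singletonD)
    with \<open>b \<in> loc A X\<close> show ?thesis unfolding loc_def by simp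
  qed
  then have "Z \<subseteq> X" using B(2) by (simp add: Inter_greatest)
  moreover have "H0 \<in> loc A X" using H0 by blast
  ultimately show False using assms(2) unfolding loc_def by blast
qed

lemma singleton_loc_after_deletion:
  assumes "factorization A (P # R)" "P = A - loc A Z" "H0 \<in> P"
    and "X \<in> lattice_L (A - {H0}) - {UNIV}"
  shows "(\<exists>H. (P - {H0}) \<inter> loc (A - {H0}) X = {H}) \<or> (\<exists>i<length R. card (R ! i \<inter> loc (A - {H0}) X) = 1)"
proof -
  have "X \<in> lattice_L A - {UNIV}" using assms(4) lattice_L_mono[of "A - {H0}" A] by blast
  then obtain i where i: "i < Suc (length R)" "card ((P # R) ! i \<inter> loc A X) = 1"
    using assms(1) unfolding factorization_def by auto
  show ?thesis
  proof (cases i)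
    case 0
    then obtain H where H: "P \<inter> loc A X = {H}" using i(2) 0 card_1_singleton_iff[of "P \<inter> loc A X"] by auto
    have "\<not> Z \<subseteq> H0" using assms(2,3) unfolding loc_def by blast
    then have "H \<noteq> H0" using H complement_loc_Int_loc_ne_singleton[OF assms(4)[THEN DiffD1]] assms(2) by blast
    then have "(P - {H0}) \<inter> loc (A - {H0}) X = {H}" using H unfolding loc_Diff by blast
    then show ?thesis by blast
  next
    case (Suc k)
    have "P \<inter> R ! k = {}" using i(1) Suc assms(1) unfolding factorization_def is_partition_Cons by simp
    then have "R ! k \<inter> loc (A - {H0}) X = R ! k \<inter> loc A X" using assms(3) unfolding loc_Diff by blast
    then show ?thesis using i Suc by (intro disjI2 exI[of _ k]) simp
  qed
qed

lemma filter_map_Diff_Cons: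
  assumes "{} \<notin> set R" "H0 \<notin> \<Union>(set R)"
  shows "filter (\<lambda>b. b \<noteq> {}) (map (\<lambda>b. b - {H0}) (P # R)) = (if P - {H0} = {} then R else (P - {H0}) # R)"
proof -
  have "map (\<lambda>b. b - {H0}) R = R" using assms(2) by (intro map_idI) blast
  moreover have "filter (\<lambda>b. b \<noteq> {}) R = R" using assms(1) by (intro filter_True) blast
  ultimately show ?thesis by simp
qed

lemma distinguished_if_first_block_complement:
  fixes A :: "('n::finite \<Rightarrow> 'a::field) set set"
  assumes "central_arrangement A" "factorization A (P # R)" "P = A - loc A Z" "H0 \<in> P"
    and "codim Z = length R"
  shows "distinguished A (P # R) H0"
proof -
  have part: "is_partition A (P # R)" and indep: "independent_part (P # R)"
    using assms(2) unfolding factorization_def by simp_all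
  then obtain R_ne: "\<forall>k<length R. R ! k \<noteq> {}" and P_disj: "\<forall>k<length R. P \<inter> R ! k = {}"
    and R_disj: "\<forall>i<length R. \<forall>j<length R. i \<noteq> j \<longrightarrow> R ! i \<inter> R ! j = {}"
    and cover: "P \<union> \<Union>(set R) = A"
    unfolding is_partition_Cons by blast
  have "B \<noteq> {} \<and> P \<inter> B = {} \<and> B \<subseteq> A" if B: "B \<in> set R" for B
  proof -
    obtain k where "k < length R" "B = R ! k" using B unfolding in_set_conv_nth by blast
    then show ?thesis using R_ne P_disj cover B by blast
  qed
  then have R: "{} \<notin> set R" "H0 \<notin> \<Union>(set R)" "\<forall>B\<in>set R. B \<subseteq> loc A Z"
    using assms(4) unfolding assms(3) by auto
  note blocks = filter_map_Diff_Cons[OF R(1,2)]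
  note singleton = singleton_loc_after_deletion[OF assms(2-4)]
  have "lin_hyperplane H0" using assms(1,3,4) unfolding central_arrangement_def by blast
  show ?thesis
  proof (cases "P - {H0} = {}")
    case True
    then have "\<Union>(set R) = A - {H0}" using cover assms(4) R(2) by auto
    then have "is_partition (A - {H0}) R" unfolding is_partition_def by (intro conjI R_ne R_disj)
    moreover have "independent_part R"
      by (rule independent_part_tail[OF assms(1) indep assms(4) \<open>lin_hyperplane H0\<close> R(3) assms(5)])
    ultimately show ?thesis
      using singleton True unfolding distinguished_def blocks factorization_def by simp
  next
    case False
    have "(P - {H0}) \<union> \<Union>(set R) = A - {H0}" using cover R(2) by auto
    moreover have "\<forall>k<length R. (P - {H0}) \<inter> R ! k = {}" using P_disj by blast
    ultimately have "is_partition (A - {H0}) ((P - {H0}) # R)"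
      unfolding is_partition_Cons using False by (intro conjI R_ne R_disj)
    moreover have "independent_part ((P - {H0}) # R)"
      using independent_part_Cons_subset[OF indep] by blast
    moreover have "\<exists>i<length ((P - {H0}) # R). card (((P - {H0}) # R) ! i \<inter> loc (A - {H0}) X) = 1"
      if X: "X \<in> lattice_L (A - {H0}) - {UNIV}" for X
    proof -
      consider H where "(P - {H0}) \<inter> loc (A - {H0}) X = {H}"
        | i where "i < length R" "card (R ! i \<inter> loc (A - {H0}) X) = 1"
        using singleton[OF X] by blast
      then show ?thesis
      proof cases
        case 1
        then show ?thesis by (intro exI[of _ 0]) simp
      next
        case (2 i)
        then show ?thesis by (intro exI[of _ "Suc i"]) simp
      qed
    qed
    ultimately show ?thesis
      using False unfolding distinguished_def blocks factorization_def by simp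
  qed
qed

lemma inj_on_Int_hyperplane_loc:
  assumes "central_arrangement (A :: ('n::finite \<Rightarrow> 'a::field) set set)" "lin_hyperplane H0" "\<not> Z \<subseteq> H0"
  shows "inj_on (\<lambda>H. H \<inter> H0) (loc A Z)"
proof (rule inj_onI, rule ccontr)
  fix H H' assume H: "H \<in> loc A Z" and H': "H' \<in> loc A Z" and eq: "H \<inter> H0 = H' \<inter> H0" and "H \<noteq> H'"
  then have "lin_hyperplane H" "lin_hyperplane H'" "H \<noteq> H0"
    using assms unfolding loc_def central_arrangement_def by auto
  then have "H \<inter> H0 = H \<inter> H'"
    using hyperplane_Int_eq[OF _ assms(2)] \<open>H \<noteq> H'\<close> eq by blast
  moreover have "Z \<subseteq> H \<inter> H'" using H H' unfolding loc_def by blast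
  ultimately show False using assms(3) by blast
qed

\<comment> \<open>\<open>Z \<inter> H \<inter> H0\<close> is squeezed between \<open>\<Inter>A\<close> and \<open>Z \<inter> H0\<close>, which have the same dimension.\<close>
lemma dim_subspace_sum_Int_hyperplanes:
  fixes A :: "('n::finite \<Rightarrow> 'a::field) set set"
  assumes "central_arrangement A" "Z \<in> lattice_L A" "codim Z + 1 = arr_rank A"
    and "H \<in> A" "H0 \<in> A" "H \<noteq> H0" "\<not> Z \<subseteq> H0"
  shows "V.dim (subspace_sum Z (H \<inter> H0)) + 1 = CARD('n)"
proof -
  have hyp: "lin_hyperplane H" "lin_hyperplane H0" using assms(1,4,5) unfolding central_arrangement_def by auto
  have Z: "V.subspace Z" by (rule subspace_lattice_L[OF assms(1,2)])
  have "V.dim (\<Inter>A) \<le> V.dim Z" using V.dim_subset Inter_subset_lattice_L[OF assms(2)] by blast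
  then have dim_Z: "V.dim Z = V.dim (\<Inter>A) + 1"
    using assms(3) dim_le_card[of Z] unfolding arr_rank_def codim_def by linarith
  have "V.dim (\<Inter>A) \<le> V.dim (Z \<inter> (H \<inter> H0))" "V.dim (Z \<inter> (H \<inter> H0)) \<le> V.dim (Z \<inter> H0)"
    using Inter_subset_lattice_L[OF assms(2)] assms(4,5) by (blast intro: V.dim_subset)+
  moreover have "V.dim (Z \<inter> H0) + 1 = V.dim Z" by (rule dim_Int_hyperplane(2)[OF Z hyp(2) assms(7)])
  moreover have "V.dim (H \<inter> H0) + 2 = CARD('n)" by (rule dim_Int_hyperplanes[OF hyp assms(6)])
  moreover have "V.dim (subspace_sum Z (H \<inter> H0)) + V.dim (Z \<inter> (H \<inter> H0)) = V.dim Z + V.dim (H \<inter> H0)"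
    using Z hyp subspace_hyperplane by (intro dim_subspace_sum_Int V.subspace_inter) auto
  ultimately show ?thesis using dim_Z by linarith
qed

lemma exists_loc_Int_hyperplane_eq:
  fixes A :: "('n::finite \<Rightarrow> 'a::field) set set"
  assumes "central_arrangement A" "modular A Z" "codim Z + 1 = arr_rank A"
    and "H \<in> A" "H0 \<in> A" "H \<noteq> H0" "\<not> Z \<subseteq> H0"
  shows "\<exists>H'\<in>loc A Z. H' \<inter> H0 = H \<inter> H0"
proof -
  define W where "W = subspace_sum Z (H \<inter> H0)"
  have Z: "Z \<in> lattice_L A" using assms(2) unfolding modular_def by blast
  have hyp: "lin_hyperplane H" "lin_hyperplane H0" using assms(1,4,5) unfolding central_arrangement_def by auto
  have subspaces: "V.subspace Z" "V.subspace (H \<inter> H0)"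
    using subspace_lattice_L[OF assms(1) Z] hyp by (auto intro: V.subspace_inter subspace_hyperplane)
  have "H \<inter> H0 \<in> lattice_L A" using assms(4,5) unfolding lattice_L_iff by (intro exI[of _ "{H, H0}"]) auto
  then have "W \<in> lattice_L A" using assms(2) unfolding modular_def W_def by blast
  then have "W \<in> A"
    using lattice_L_mem_if_dim[OF assms(1)] dim_subspace_sum_Int_hyperplanes[OF assms(1) Z assms(3-7)]
    unfolding W_def by blast
  moreover have "Z \<subseteq> W" "H \<inter> H0 \<subseteq> W" using subset_subspace_sum[OF subspaces] unfolding W_def by blast+
  moreover have "lin_hyperplane W" using \<open>W \<in> A\<close> assms(1) unfolding central_arrangement_def by blast
  ultimately have "W \<in> loc A Z" "W \<inter> H0 = H \<inter> H0"
    using hyperplane_Int_eq[OF hyp(2), of H W] assms(6,7) hyp(1) unfolding loc_def by (auto simp: Int_commute)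
  then show ?thesis by blast
qed

lemma bij_betw_Int_hyperplane_loc:
  fixes A :: "('n::finite \<Rightarrow> 'a::field) set set"
  assumes "central_arrangement A" "modular A Z" "codim Z + 1 = arr_rank A" "H0 \<in> A - loc A Z"
  shows "bij_betw (\<lambda>H. H \<inter> H0) (loc A Z) (restr_arr A H0)"
proof -
  have "H0 \<in> A" "\<not> Z \<subseteq> H0" "lin_hyperplane H0"
    using assms(1,4) unfolding loc_def central_arrangement_def by auto
  have "(\<lambda>H. H \<inter> H0) ` loc A Z \<subseteq> restr_arr A H0"
    using \<open>\<not> Z \<subseteq> H0\<close> unfolding restr_arr_def loc_def by blast
  moreover have "restr_arr A H0 \<subseteq> (\<lambda>H. H \<inter> H0) ` loc A Z"
  proof
    fix Y assume "Y \<in> restr_arr A H0"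
    then obtain H where "H \<in> A" "H \<noteq> H0" "Y = H \<inter> H0" unfolding restr_arr_def by blast
    then obtain H' where "H' \<in> loc A Z" "H' \<inter> H0 = Y"
      using exists_loc_Int_hyperplane_eq[OF assms(1-3) _ \<open>H0 \<in> A\<close> _ \<open>\<not> Z \<subseteq> H0\<close>] by blast
    then show "Y \<in> (\<lambda>H. H \<inter> H0) ` loc A Z" by blast
  qed
  ultimately show ?thesis
    unfolding bij_betw_def using inj_on_Int_hyperplane_loc[OF assms(1) \<open>lin_hyperplane H0\<close> \<open>\<not> Z \<subseteq> H0\<close>]
    by blast
qed

theorem lemma3p10:
  fixes A :: "('n::finite \<Rightarrow> 'a::field) set set"
    and ps :: "('n \<Rightarrow> 'a) set set list"
    and Z :: "('n \<Rightarrow> 'a) set"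
    and r :: nat
  assumes "central_arrangement A"
    and "arr_rank A = r"
    and "1 \<le> r"
    and "length ps = r"
    and "factorization A ps"
    and "Z \<in> lattice_L A"
    and "modular A Z"
    and "codim Z = r - 1"
    and "ps ! 0 = A - loc A Z"
  shows "(\<forall>H\<in>ps ! 0. distinguished A ps H) \<and>
         (\<forall>H0\<in>ps ! 0. bij_betw (\<lambda>H. H \<inter> H0) (loc A Z) (restr_arr A H0))"
proof -
  obtain P R where ps: "ps = P # R" using assms(3,4) by (cases ps) auto
  have P: "P = A - loc A Z" using assms(9) ps by simp
  have "codim Z = length R" "codim Z + 1 = arr_rank A" using assms(2-4,8) ps by auto
  then show ?thesis
    using distinguished_if_first_block_complement[OF assms(1) assms(5)[unfolded ps] P]
      bij_betw_Int_hyperplane_loc[OF assms(1,7)] P ps by simp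
qed

end
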